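(* Let $E\in\mathbb C$ not be an eigenvalue of $h$, and let $g(E)=(h-EI_{nm})^{-1}$ with $m\times m$ blocks $g_{i,j}$, $i,j=1,\dots,n$. Then $$\begin{pmatrix}0 & -B_n^{-1}\\ g_{n,1} & g_{n,n}\end{pmatrix}=T(E)\begin{pmatrix} g_{1,1} & g_{1,n}\\ -C_1^{-1} & 0\end{pmatrix},$$ the block $g_{1,n}$ is invertible, and $$T(E)=\begin{pmatrix}-B_n^{-1}g_{1,n}^{-1} & -B_n^{-1}g_{1,n}^{-1}g_{1,1}C_1\\ g_{n,n}g_{1,n}^{-1} & g_{n,n}g_{1,n}^{-1}g_{1,1}C_1-g_{n,1}C_1\end{pmatrix}.$$
   Context: Fix integers $m\ge 1$, $n\ge 2$ and matrices $A_k,B_k,C_k\in\mathbb C^{m\times m}$, $k=1,\dots,n$, with all $B_k,C_k$ invertible. For $E\in\mathbb C$ the one-step transfer matrices are $t_k(E)=\begin{pmatrix} B_k^{-1}(E I_m-A_k) & -B_k^{-1}C_k\\ I_m & 0\end{pmatrix}\in\mathbb C^{2m\times 2m}$ and the transfer matrix is $T(E)=t_n(E)\cdots t_1(E)$. The open-chain matrix $h\in\mathbb C^{nm\times nm}$ is the block tridiagonal matrix with diagonal blocks $h_{kk}=A_k$, superdiagonal blocks $h_{k,k+1}=B_k$, subdiagonal blocks $h_{k+1,k}=C_{k+1}$ ($k=1,\dots,n-1$), and all other blocks zero. *)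

theory Defs
  imports "Jordan_Normal_Form.Matrix" "Jordan_Normal_Form.Char_Poly"
begin

definition minv :: "complex mat \<Rightarrow> complex mat" where
  "minv A = (SOME B. B \<in> carrier_mat (dim_row A) (dim_row A) \<and> inverts_mat A B \<and> inverts_mat B A)"

definition tmat :: "nat \<Rightarrow> (nat \<Rightarrow> complex mat) \<Rightarrow> (nat \<Rightarrow> complex mat) \<Rightarrow> (nat \<Rightarrow> complex mat)
    \<Rightarrow> complex \<Rightarrow> nat \<Rightarrow> complex mat" where
  "tmat m A B C E k = four_block_mat
     (minv (B k) * (E \<cdot>\<^sub>m 1\<^sub>m m - A k)) (- (minv (B k) * C k))
     (1\<^sub>m m) (0\<^sub>m m m)"

fun Tprod :: "nat \<Rightarrow> (nat \<Rightarrow> complex mat) \<Rightarrow> (nat \<Rightarrow> complex mat) \<Rightarrow> (nat \<Rightarrow> complex mat)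
    \<Rightarrow> complex \<Rightarrow> nat \<Rightarrow> complex mat" where
  "Tprod m A B C E 0 = 1\<^sub>m (2 * m)"
| "Tprod m A B C E (Suc k) = tmat m A B C E (Suc k) * Tprod m A B C E k"

definition Tmat :: "nat \<Rightarrow> nat \<Rightarrow> (nat \<Rightarrow> complex mat) \<Rightarrow> (nat \<Rightarrow> complex mat) \<Rightarrow> (nat \<Rightarrow> complex mat)
    \<Rightarrow> complex \<Rightarrow> complex mat" where
  "Tmat n m A B C E = Tprod m A B C E n"

(* open-chain block tridiagonal matrix h (nm x nm); block indices k = 1..n,
   entry (i,j) lies in block (i div m + 1, j div m + 1) *)
definition hmat :: "nat \<Rightarrow> nat \<Rightarrow> (nat \<Rightarrow> complex mat) \<Rightarrow> (nat \<Rightarrow> complex mat) \<Rightarrow> (nat \<Rightarrow> complex mat)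
    \<Rightarrow> complex mat" where
  "hmat n m A B C = mat (n * m) (n * m) (\<lambda>(i, j).
     let bi = i div m; bj = j div m; r = i mod m; s = j mod m in
     if bi = bj then A (bi + 1) $$ (r, s)
     else if bj = bi + 1 then B (bi + 1) $$ (r, s)
     else if bi = bj + 1 then C (bi + 1) $$ (r, s)
     else 0)"

definition blk :: "nat \<Rightarrow> complex mat \<Rightarrow> nat \<Rightarrow> nat \<Rightarrow> complex mat" where
  "blk m G i j = mat m m (\<lambda>(r, s). G $$ ((i - 1) * m + r, (j - 1) * m + s))"

end

theory Submission
  imports Defs
begin

(* Read block row by block row, (h - E) g = 1 says that every block column k |-> g(k,j) of
   the resolvent solves the three-term recurrence
     C_k g(k-1,j) + (A_k - E) g(k,j) + B_k g(k+1,j) = delta_kj.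
   For the first and the last column the inhomogeneity sits in a boundary row, where it is
   absorbed by the boundary values g(0,1) = -C_1^-1 and g(n+1,n) = -B_n^-1 (all other boundary
   values being 0).  The extended columns solve the homogeneous recurrence, so t_k maps block
   rows (k, k-1) of these two columns to block rows (k+1, k), and the product of the n steps is
   the first identity.  Its upper right block reads T_11 g(1,n) = -B_n^-1, hence g(1,n) is
   invertible; then the right factor of the identity has an explicit inverse, and solving for T
   gives the formula. *)

lemma invertible_minv:
  assumes A: "A \<in> carrier_mat k k" and inv: "invertible_mat A"
  shows "minv A \<in> carrier_mat k k" "A * minv A = 1\<^sub>m k" "minv A * A = 1\<^sub>m k"
proof -
  from inv obtain B where AB: "inverts_mat A B" and BA: "inverts_mat B A"
    unfolding invertible_mat_def by auto
  have "B \<in> carrier_mat k k"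
    using AB BA A unfolding inverts_mat_def
    by (metis carrier_matD carrier_matI index_mult_mat(2,3) index_one_mat(2,3))
  then have "\<exists>B. B \<in> carrier_mat (dim_row A) (dim_row A) \<and> inverts_mat A B \<and> inverts_mat B A"
    using AB BA A by auto
  then have "minv A \<in> carrier_mat (dim_row A) (dim_row A)
      \<and> inverts_mat A (minv A) \<and> inverts_mat (minv A) A"
    unfolding minv_def by (rule someI_ex)
  then show "minv A \<in> carrier_mat k k" "A * minv A = 1\<^sub>m k" "minv A * A = 1\<^sub>m k"
    using A unfolding inverts_mat_def by auto
qed

lemma invertible_mat_left_inverse:
  assumes A: "(A :: 'a :: field mat) \<in> carrier_mat k k" and B: "B \<in> carrier_mat k k"
    and BA: "B * A = 1\<^sub>m k"
  shows "invertible_mat A"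
  using mat_mult_left_right_inverse[OF B A BA] A B BA
  unfolding invertible_mat_def inverts_mat_def by auto

lemma invertible_mat_det:
  assumes A: "(A :: 'a :: field mat) \<in> carrier_mat k k" and "det A \<noteq> 0"
  shows "invertible_mat A"
proof -
  have "A \<in> Units (ring_mat TYPE('a) k undefined)" by (rule det_non_zero_imp_unit[OF assms])
  then obtain B where "B \<in> carrier_mat k k" "B * A = 1\<^sub>m k"
    unfolding Units_def ring_mat_def by auto
  then show ?thesis using invertible_mat_left_inverse A by blast
qed

lemma invertible_if_not_eigenvalue:
  assumes A: "(A :: 'a :: field mat) \<in> carrier_mat k k" and "\<not> eigenvalue A e"
  shows "invertible_mat (A - e \<cdot>\<^sub>m 1\<^sub>m k)"
proof -
  have "char_matrix A e = A - e \<cdot>\<^sub>m 1\<^sub>m k"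
    unfolding char_matrix_def by (rule eq_matI) (use A in auto)
  then have "det (A - e \<cdot>\<^sub>m 1\<^sub>m k) \<noteq> 0"
    using assms eigenvalue_det[OF A] by simp
  then show ?thesis
    using A by (intro invertible_mat_det) auto
qed

lemma blk_carrier [simp]: "blk m G i j \<in> carrier_mat m m"
  and dim_blk [simp]: "dim_row (blk m G i j) = m" "dim_col (blk m G i j) = m"
  unfolding blk_def by auto

lemma index_blk [simp]:
  "r < m \<Longrightarrow> s < m \<Longrightarrow> blk m G i j $$ (r, s) = G $$ ((i - 1) * m + r, (j - 1) * m + s)"
  unfolding blk_def by auto

lemma block_index_bound:
  fixes i n m r :: nat
  assumes "i \<in> {1..n}" "r < m" shows "(i - 1) * m + r < n * m"
proof -
  have "(i - 1) * m + r < (i - 1) * m + m" using assms(2) by simp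
  also have "\<dots> = i * m" using assms by (cases i) auto
  also have "\<dots> \<le> n * m" using assms by auto
  finally show ?thesis .
qed

lemma block_index_eq_iff:
  fixes i j m r s :: nat
  assumes "i \<ge> 1" "j \<ge> 1" "r < m" "s < m"
  shows "(i - 1) * m + r = (j - 1) * m + s \<longleftrightarrow> i = j \<and> r = s"
proof
  assume eq: "(i - 1) * m + r = (j - 1) * m + s"
  have "i - 1 = j - 1" using arg_cong[OF eq, of "\<lambda>x. x div m"] assms by simp
  moreover have "r = s" using arg_cong[OF eq, of "\<lambda>x. x mod m"] assms by simp
  ultimately show "i = j \<and> r = s" using assms by simp
qed simp

lemma sum_nat_mult_blocks:
  "(\<Sum>l<n * m. f l) = (\<Sum>b<n. \<Sum>t<m. f (b * m + t :: nat))"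
proof -
  have "(\<Sum>l<n * m. f l) = (\<Sum>b<n. sum f {b * m..<b * m + m})"
    using sum.nat_group[of f m n] by simp
  also have "\<dots> = (\<Sum>b<n. \<Sum>t<m. f (b * m + t))"
    using sum.shift_bounds_nat_ivl[of f 0 "_ * m" m]
    by (simp add: atLeast0LessThan[symmetric] add.commute)
  finally show ?thesis .
qed

lemma index_blk_mult:
  assumes H: "H \<in> carrier_mat (n * m) (n * m)" and G: "G \<in> carrier_mat (n * m) (n * m)"
    and i: "i \<in> {1..n}" and j: "j \<in> {1..n}" and r: "r < m" and s: "s < m"
  shows "blk m (H * G) i j $$ (r, s) = (\<Sum>l = 1..n. (blk m H i l * blk m G l j) $$ (r, s))"
proof -
  have "blk m (H * G) i j $$ (r, s)
      = (\<Sum>q<n * m. H $$ ((i - 1) * m + r, q) * G $$ (q, (j - 1) * m + s))"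
    using assms block_index_bound[OF i r] block_index_bound[OF j s]
    by (simp add: scalar_prod_def atLeast0LessThan)
  also have "\<dots> = (\<Sum>b<n. \<Sum>t<m.
      H $$ ((i - 1) * m + r, b * m + t) * G $$ (b * m + t, (j - 1) * m + s))"
    by (rule sum_nat_mult_blocks)
  also have "\<dots> = (\<Sum>l = 1..n. (blk m H i l * blk m G l j) $$ (r, s))"
    using r s by (simp add: sum.atLeast1_atMost_eq scalar_prod_def atLeast0LessThan)
  finally show ?thesis .
qed

lemma hmat_carrier [simp]: "hmat n m A B C \<in> carrier_mat (n * m) (n * m)"
  unfolding hmat_def by simp

lemma blk_hmat_minus_smult:
  assumes k: "k \<in> {1..n}" and l: "l \<in> {1..n}"
    and c: "A k \<in> carrier_mat m m" "B k \<in> carrier_mat m m" "C k \<in> carrier_mat m m"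
  shows "blk m (hmat n m A B C - E \<cdot>\<^sub>m 1\<^sub>m (n * m)) k l =
    (if l = k then A k - E \<cdot>\<^sub>m 1\<^sub>m m
     else if l = k + 1 then B k else if l + 1 = k then C k else 0\<^sub>m m m)"
    (is "_ = ?rhs")
proof (rule eq_matI)
  fix r s assume "r < dim_row ?rhs" "s < dim_col ?rhs"
  then have r: "r < m" and s: "s < m" using c by (auto split: if_splits)
  let ?i = "(k - 1) * m + r" and ?j = "(l - 1) * m + s"
  have ij: "?i < n * m" "?j < n * m"
    using block_index_bound[OF k r] block_index_bound[OF l s] .
  have dm: "?i div m = k - 1" "?i mod m = r" "?j div m = l - 1" "?j mod m = s"
    using r s by auto
  have h: "hmat n m A B C $$ (?i, ?j) =
    (if l = k then A k $$ (r, s) else if l = k + 1 then B k $$ (r, s)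
     else if l + 1 = k then C k $$ (r, s) else 0)"
    unfolding hmat_def index_mat(1)[OF ij] prod.case Let_def dm using k l by auto
  have "?i = ?j \<longleftrightarrow> l = k \<and> r = s"
    using block_index_eq_iff[OF _ _ r s, of k l] k l by auto
  then have one: "1\<^sub>m (n * m) $$ (?i, ?j) = (if l = k \<and> r = s then 1 else 0)"
    using ij by simp
  have "blk m (hmat n m A B C - E \<cdot>\<^sub>m 1\<^sub>m (n * m)) k l $$ (r, s)
      = hmat n m A B C $$ (?i, ?j) - E * 1\<^sub>m (n * m) $$ (?i, ?j)"
    using r s ij by simp
  also have "\<dots> = ?rhs $$ (r, s)"
    unfolding h one using r s c by auto
  finally show "blk m (hmat n m A B C - E \<cdot>\<^sub>m 1\<^sub>m (n * m)) k l $$ (r, s) = ?rhs $$ (r, s)" .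
qed (use c in auto)

lemma blk_one_mat:
  assumes "k \<in> {1..n}" "j \<in> {1..n}"
  shows "blk m (1\<^sub>m (n * m)) k j = (if k = j then 1\<^sub>m m else 0\<^sub>m m m)"
proof (rule eq_matI)
  fix r s assume "r < dim_row (if k = j then 1\<^sub>m m else 0\<^sub>m m m :: complex mat)"
    "s < dim_col (if k = j then 1\<^sub>m m else 0\<^sub>m m m :: complex mat)"
  then have r: "r < m" and s: "s < m" by (auto split: if_splits)
  have "(k - 1) * m + r = (j - 1) * m + s \<longleftrightarrow> k = j \<and> r = s"
    using block_index_eq_iff[OF _ _ r s, of k j] assms by auto
  then show "blk m (1\<^sub>m (n * m)) k j $$ (r, s) = (if k = j then 1\<^sub>m m else 0\<^sub>m m m) $$ (r, s)"
    using r s block_index_bound[OF assms(1) r] block_index_bound[OF assms(2) s] by auto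
qed auto

lemma resolvent_block_row:
  assumes c: "A k \<in> carrier_mat m m" "B k \<in> carrier_mat m m" "C k \<in> carrier_mat m m"
    and G: "G \<in> carrier_mat (n * m) (n * m)"
    and HG: "(hmat n m A B C - E \<cdot>\<^sub>m 1\<^sub>m (n * m)) * G = 1\<^sub>m (n * m)"
    and k: "k \<in> {1..n}" and j: "j \<in> {1..n}"
  shows "(if 2 \<le> k then C k * blk m G (k - 1) j else 0\<^sub>m m m)
      + (A k - E \<cdot>\<^sub>m 1\<^sub>m m) * blk m G k j
      + (if k < n then B k * blk m G (k + 1) j else 0\<^sub>m m m)
    = (if k = j then 1\<^sub>m m else 0\<^sub>m m m)"
    (is "?lhs = ?rhs")
proof (rule eq_matI)
  let ?H = "hmat n m A B C - E \<cdot>\<^sub>m 1\<^sub>m (n * m)"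
  fix r s assume "r < dim_row ?rhs" "s < dim_col ?rhs"
  then have r: "r < m" and s: "s < m" by (auto split: if_splits)
  define P where "P = ((A k - E \<cdot>\<^sub>m 1\<^sub>m m) * blk m G k j) $$ (r, s)"
  define Q where "Q = (B k * blk m G (k + 1) j) $$ (r, s)"
  define R where "R = (C k * blk m G (k - 1) j) $$ (r, s)"
  have "?rhs $$ (r, s) = blk m (?H * G) k j $$ (r, s)"
    unfolding HG blk_one_mat[OF k j] ..
  also have "\<dots> = (\<Sum>l = 1..n. (blk m ?H k l * blk m G l j) $$ (r, s))"
    using G r s k j by (intro index_blk_mult) auto
  also have "\<dots> = (\<Sum>l = 1..n. (if l = k then P else 0) + (if l = k + 1 then Q else 0)
                              + (if l = k - 1 then R else 0))"
  proof (rule sum.cong [OF refl])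
    fix l assume l: "l \<in> {1..n}"
    show "(blk m ?H k l * blk m G l j) $$ (r, s) = (if l = k then P else 0)
        + (if l = k + 1 then Q else 0) + (if l = k - 1 then R else 0)"
      unfolding blk_hmat_minus_smult[where A = A and B = B and C = C, OF k l c] P_def Q_def R_def
      using r s c k
      by (auto simp del: index_mult_mat(1))
  qed
  also have "\<dots> = P + (if k < n then Q else 0) + (if 2 \<le> k then R else 0)"
    using k by (simp add: sum.distrib, arith)
  also have "\<dots> = ?lhs $$ (r, s)"
    unfolding P_def Q_def R_def using r s c by (simp del: index_mult_mat(1))
  finally show "?lhs $$ (r, s) = ?rhs $$ (r, s)" ..
qed (use c in auto)

lemma extended_resolvent_column:
  assumes cA: "\<And>k. k \<in> {1..n} \<Longrightarrow> A k \<in> carrier_mat m m"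
    and cB: "\<And>k. k \<in> {1..n} \<Longrightarrow> B k \<in> carrier_mat m m"
    and cC: "\<And>k. k \<in> {1..n} \<Longrightarrow> C k \<in> carrier_mat m m"
    and G: "G \<in> carrier_mat (n * m) (n * m)"
    and HG: "(hmat n m A B C - E \<cdot>\<^sub>m 1\<^sub>m (n * m)) * G = 1\<^sub>m (n * m)"
    and n: "n \<ge> 2" and j: "j = 1 \<or> j = n"
    and X: "\<And>k. k \<in> {1..n} \<Longrightarrow> X k = blk m G k j"
    and cX: "X 0 \<in> carrier_mat m m" "X (n + 1) \<in> carrier_mat m m"
    and X0: "C 1 * X 0 = (if j = 1 then - 1\<^sub>m m else 0\<^sub>m m m)"
    and Xn: "B n * X (n + 1) = (if j = n then - 1\<^sub>m m else 0\<^sub>m m m)"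
    and k: "k \<in> {1..n}"
  shows "C k * X (k - 1) + (A k - E \<cdot>\<^sub>m 1\<^sub>m m) * X k + B k * X (k + 1) = 0\<^sub>m m m"
proof -
  have c: "A k \<in> carrier_mat m m" "B k \<in> carrier_mat m m" "C k \<in> carrier_mat m m"
    using cA cB cC k by auto
  have cXk: "X (k + 1) \<in> carrier_mat m m"
    using X[of "k + 1"] cX(2) k by (cases "k = n") auto
  have j': "j \<in> {1..n}" using j n by auto
  show ?thesis
  proof (rule eq_matI)
    fix r s assume "r < dim_row (0\<^sub>m m m :: complex mat)" "s < dim_col (0\<^sub>m m m :: complex mat)"
    then have r: "r < m" and s: "s < m" by auto
    note row = arg_cong[OF resolvent_block_row[OF c G HG k j'], of "\<lambda>M. M $$ (r, s)"]
    consider "k = 1" | "k = n" | "1 < k" "k < n" using k n by fastforce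
    then show "(C k * X (k - 1) + (A k - E \<cdot>\<^sub>m 1\<^sub>m m) * X k + B k * X (k + 1)) $$ (r, s)
        = 0\<^sub>m m m $$ (r, s)"
    proof cases
      case 1
      then show ?thesis
        using row arg_cong[OF X0, of "\<lambda>M. M $$ (r, s)"] X[of 1] X[of "Suc 1"] j n r s c cX
        by (auto simp del: index_mult_mat(1) simp: algebra_simps)
    next
      case 2
      then show ?thesis
        using row arg_cong[OF Xn, of "\<lambda>M. M $$ (r, s)"] X[of n] X[of "n - 1"] j n r s c cX
        by (auto simp del: index_mult_mat(1))
    next
      case 3
      have "X (k - 1) = blk m G (k - 1) j" using 3 by (intro X) (simp, linarith)
      moreover have "X (k + 1) = blk m G (k + 1) j" using 3 by (intro X) simp
      ultimately show ?thesis
        using 3 row X[OF k] j n r s c by (auto simp del: index_mult_mat(1))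
    qed
  qed (use c cXk in auto)
qed

lemma three_term_recurrence_solve:
  fixes A B C X0 X1 X2 :: "complex mat"
  assumes c: "A \<in> carrier_mat m m" "B \<in> carrier_mat m m" "C \<in> carrier_mat m m"
    "X0 \<in> carrier_mat m m" "X1 \<in> carrier_mat m m" "X2 \<in> carrier_mat m m"
    and inv: "invertible_mat B"
    and rec: "C * X0 + (A - E \<cdot>\<^sub>m 1\<^sub>m m) * X1 + B * X2 = 0\<^sub>m m m"
  shows "minv B * (E \<cdot>\<^sub>m 1\<^sub>m m - A) * X1 + - (minv B * C) * X0 = X2"
proof -
  note Bi = invertible_minv[OF c(2) inv]
  have BX2: "B * X2 = (E \<cdot>\<^sub>m 1\<^sub>m m - A) * X1 - C * X0"
  proof (rule eq_matI)
    fix r s assume "r < dim_row ((E \<cdot>\<^sub>m 1\<^sub>m m - A) * X1 - C * X0)"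
      "s < dim_col ((E \<cdot>\<^sub>m 1\<^sub>m m - A) * X1 - C * X0)"
    then have r: "r < m" and s: "s < m" using c by auto
    have "(C * X0 + (A - E \<cdot>\<^sub>m 1\<^sub>m m) * X1 + B * X2) $$ (r, s) = 0"
      using rec r s by simp
    moreover have "A - E \<cdot>\<^sub>m 1\<^sub>m m = - (E \<cdot>\<^sub>m 1\<^sub>m m - A)"
      by (rule eq_matI) (use c in auto)
    ultimately show "(B * X2) $$ (r, s) = ((E \<cdot>\<^sub>m 1\<^sub>m m - A) * X1 - C * X0) $$ (r, s)"
      using r s c by (simp del: index_mult_mat(1)) (simp add: algebra_simps)
  qed (use c in auto)
  have "X2 = minv B * (B * X2)"
    using c Bi by (simp add: assoc_mult_mat[symmetric])
  also have "\<dots> = minv B * ((E \<cdot>\<^sub>m 1\<^sub>m m - A) * X1) - minv B * (C * X0)"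
    unfolding BX2 using c Bi by (intro mult_minus_distrib_mat) auto
  also have "\<dots> = minv B * ((E \<cdot>\<^sub>m 1\<^sub>m m - A) * X1) + - (minv B * (C * X0))"
    using c Bi by (intro minus_add_uminus_mat[of _ m m]) auto
  also have "\<dots> = minv B * (E \<cdot>\<^sub>m 1\<^sub>m m - A) * X1 + - (minv B * C) * X0"
    using c Bi minus_carrier_mat[OF c(1), of "E \<cdot>\<^sub>m 1\<^sub>m m"] by simp
  finally show ?thesis ..
qed

lemma tmat_carrier:
  assumes "A k \<in> carrier_mat m m" "B k \<in> carrier_mat m m" "C k \<in> carrier_mat m m"
    and "invertible_mat (B k)"
  shows "tmat m A B C E k \<in> carrier_mat (2 * m) (2 * m)"
  using invertible_minv[OF assms(2,4)] assms
  unfolding tmat_def mult_2 by (intro four_block_carrier_mat) auto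

lemma tmat_mult_four_block:
  assumes c: "A k \<in> carrier_mat m m" "B k \<in> carrier_mat m m" "C k \<in> carrier_mat m m"
    and inv: "invertible_mat (B k)"
    and cX: "X0 \<in> carrier_mat m m" "X1 \<in> carrier_mat m m" "X2 \<in> carrier_mat m m"
    and cY: "Y0 \<in> carrier_mat m m" "Y1 \<in> carrier_mat m m" "Y2 \<in> carrier_mat m m"
    and recX: "C k * X0 + (A k - E \<cdot>\<^sub>m 1\<^sub>m m) * X1 + B k * X2 = 0\<^sub>m m m"
    and recY: "C k * Y0 + (A k - E \<cdot>\<^sub>m 1\<^sub>m m) * Y1 + B k * Y2 = 0\<^sub>m m m"
  shows "tmat m A B C E k * four_block_mat X1 Y1 X0 Y0 = four_block_mat X2 Y2 X1 Y1"
proof -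
  note Bi = invertible_minv[OF c(2) inv]
  have "tmat m A B C E k * four_block_mat X1 Y1 X0 Y0 = four_block_mat
      (minv (B k) * (E \<cdot>\<^sub>m 1\<^sub>m m - A k) * X1 + - (minv (B k) * C k) * X0)
      (minv (B k) * (E \<cdot>\<^sub>m 1\<^sub>m m - A k) * Y1 + - (minv (B k) * C k) * Y0)
      (1\<^sub>m m * X1 + 0\<^sub>m m m * X0) (1\<^sub>m m * Y1 + 0\<^sub>m m m * Y0)"
    unfolding tmat_def using c Bi cX cY by (intro mult_four_block_mat) auto
  also have "\<dots> = four_block_mat X2 Y2 X1 Y1"
    using three_term_recurrence_solve[OF c cX inv recX] three_term_recurrence_solve[OF c cY inv recY]
      cX cY by simp
  finally show ?thesis .
qed

lemma Tprod_carrier: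
  assumes cA: "\<And>k. k \<in> {1..n} \<Longrightarrow> A k \<in> carrier_mat m m"
    and cB: "\<And>k. k \<in> {1..n} \<Longrightarrow> B k \<in> carrier_mat m m"
    and cC: "\<And>k. k \<in> {1..n} \<Longrightarrow> C k \<in> carrier_mat m m"
    and iB: "\<And>k. k \<in> {1..n} \<Longrightarrow> invertible_mat (B k)"
  shows "k \<le> n \<Longrightarrow> Tprod m A B C E k \<in> carrier_mat (2 * m) (2 * m)"
proof (induction k)
  case (Suc k)
  then have "Suc k \<in> {1..n}" by simp
  then have "tmat m A B C E (Suc k) \<in> carrier_mat (2 * m) (2 * m)"
    using cA cB cC iB by (intro tmat_carrier)
  with Suc show ?case by simp
qed simp

lemma Tmat_mult_telescope:
  assumes cA: "\<And>k. k \<in> {1..n} \<Longrightarrow> A k \<in> carrier_mat m m"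
    and cB: "\<And>k. k \<in> {1..n} \<Longrightarrow> B k \<in> carrier_mat m m"
    and cC: "\<And>k. k \<in> {1..n} \<Longrightarrow> C k \<in> carrier_mat m m"
    and iB: "\<And>k. k \<in> {1..n} \<Longrightarrow> invertible_mat (B k)"
    and S0: "S 0 \<in> carrier_mat (2 * m) (2 * m)"
    and step: "\<And>k. k \<in> {1..n} \<Longrightarrow> tmat m A B C E k * S (k - 1) = S k"
  shows "Tmat n m A B C E * S 0 = S n"
proof -
  have "Tprod m A B C E k * S 0 = S k" if "k \<le> n" for k
    using that
  proof (induction k)
    case (Suc k)
    then have k: "Suc k \<in> {1..n}" by simp
    have "tmat m A B C E (Suc k) \<in> carrier_mat (2 * m) (2 * m)"
      using cA[OF k] cB[OF k] cC[OF k] iB[OF k] by (rule tmat_carrier)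
    moreover have "Tprod m A B C E k \<in> carrier_mat (2 * m) (2 * m)"
      using Tprod_carrier[of n A m B C k E] cA cB cC iB k by simp
    ultimately show ?case using Suc step[OF k] S0 by simp
  qed (use S0 in simp)
  then show ?thesis unfolding Tmat_def by simp
qed

lemma resolvent_transfer_identity:
  assumes cA: "\<And>k. k \<in> {1..n} \<Longrightarrow> A k \<in> carrier_mat m m"
    and cB: "\<And>k. k \<in> {1..n} \<Longrightarrow> B k \<in> carrier_mat m m"
    and cC: "\<And>k. k \<in> {1..n} \<Longrightarrow> C k \<in> carrier_mat m m"
    and iB: "\<And>k. k \<in> {1..n} \<Longrightarrow> invertible_mat (B k)"
    and iC: "invertible_mat (C 1)"
    and n: "n \<ge> 2"
    and G: "G \<in> carrier_mat (n * m) (n * m)"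
    and HG: "(hmat n m A B C - E \<cdot>\<^sub>m 1\<^sub>m (n * m)) * G = 1\<^sub>m (n * m)"
  shows "four_block_mat (0\<^sub>m m m) (- minv (B n)) (blk m G n 1) (blk m G n n)
    = Tmat n m A B C E * four_block_mat (blk m G 1 1) (blk m G 1 n) (- minv (C 1)) (0\<^sub>m m m)"
proof -
  have n1: "1 \<in> {1..n}" "n \<in> {1..n}" using n by auto
  note Bn = invertible_minv[OF cB[OF n1(2)] iB[OF n1(2)]]
  note C1 = invertible_minv[OF cC[OF n1(1)] iC]
  define X where "X j k = (if k = 0 then (if j = 1 then - minv (C 1) else 0\<^sub>m m m)
    else if k = n + 1 then (if j = n then - minv (B n) else 0\<^sub>m m m) else blk m G k j)" for j k
  have cX: "X j k \<in> carrier_mat m m" for j k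
    unfolding X_def using Bn C1 by auto
  have rec: "C k * X j (k - 1) + (A k - E \<cdot>\<^sub>m 1\<^sub>m m) * X j k + B k * X j (k + 1) = 0\<^sub>m m m"
    if k: "k \<in> {1..n}" and j: "j = 1 \<or> j = n" for j k
  proof (rule extended_resolvent_column[OF cA cB cC G HG n j _ cX cX _ _ k])
    show "X j l = blk m G l j" if "l \<in> {1..n}" for l
      using that unfolding X_def by auto
    show "C 1 * X j 0 = (if j = 1 then - 1\<^sub>m m else 0\<^sub>m m m)"
      using C1 cC[OF n1(1)] unfolding X_def by auto
    show "B n * X j (n + 1) = (if j = n then - 1\<^sub>m m else 0\<^sub>m m m)"
      using Bn cB[OF n1(2)] unfolding X_def by auto
  qed
  define S where "S k = four_block_mat (X 1 (k + 1)) (X n (k + 1)) (X 1 k) (X n k)" for k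
  have "Tmat n m A B C E * S 0 = S n"
  proof (rule Tmat_mult_telescope[OF cA cB cC iB])
    show "S 0 \<in> carrier_mat (2 * m) (2 * m)"
      unfolding S_def mult_2 using cX by (intro four_block_carrier_mat)
    fix k assume k: "k \<in> {1..n}"
    then have k1: "k - 1 + 1 = k" by simp
    show "tmat m A B C E k * S (k - 1) = S k"
      unfolding S_def k1 using k
      by (intro tmat_mult_four_block cA cB cC iB cX rec[OF k]) auto
  qed
  moreover have "S 0 = four_block_mat (blk m G 1 1) (blk m G 1 n) (- minv (C 1)) (0\<^sub>m m m)"
    "S n = four_block_mat (0\<^sub>m m m) (- minv (B n)) (blk m G n 1) (blk m G n n)"
    unfolding S_def X_def using n by auto
  ultimately show ?thesis by simp
qed

lemma four_block_mat_inject: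
  assumes c: "A \<in> carrier_mat nr1 nc1" "B \<in> carrier_mat nr1 nc2"
    "C \<in> carrier_mat nr2 nc1" "D \<in> carrier_mat nr2 nc2"
    "A' \<in> carrier_mat nr1 nc1" "B' \<in> carrier_mat nr1 nc2"
    "C' \<in> carrier_mat nr2 nc1" "D' \<in> carrier_mat nr2 nc2"
    and eq: "four_block_mat A B C D = four_block_mat A' B' C' D'"
  shows "A = A' \<and> B = B' \<and> C = C' \<and> D = D'"
proof (intro conjI)
  have e: "four_block_mat A B C D $$ (i, j) = four_block_mat A' B' C' D' $$ (i, j)" for i j
    using eq by simp
  show "A = A'"
  proof (rule eq_matI)
    fix i j assume "i < dim_row A'" "j < dim_col A'"
    then show "A $$ (i, j) = A' $$ (i, j)" using e[of i j] c by simp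
  qed (use c in simp_all)
  show "B = B'"
  proof (rule eq_matI)
    fix i j assume "i < dim_row B'" "j < dim_col B'"
    then show "B $$ (i, j) = B' $$ (i, j)" using e[of i "j + nc1"] c by simp
  qed (use c in simp_all)
  show "C = C'"
  proof (rule eq_matI)
    fix i j assume "i < dim_row C'" "j < dim_col C'"
    then show "C $$ (i, j) = C' $$ (i, j)" using e[of "i + nr1" j] c by simp
  qed (use c in simp_all)
  show "D = D'"
  proof (rule eq_matI)
    fix i j assume "i < dim_row D'" "j < dim_col D'"
    then show "D $$ (i, j) = D' $$ (i, j)" using e[of "i + nr1" "j + nc1"] c by simp
  qed (use c in simp_all)
qed

lemma invertible_top_right_factor:
  fixes T P Q R U V W Y Z :: "complex mat"
  assumes T: "T \<in> carrier_mat (m + m) (m + m)"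
    and c: "P \<in> carrier_mat m m" "Q \<in> carrier_mat m m" "R \<in> carrier_mat m m"
      "U \<in> carrier_mat m m" "V \<in> carrier_mat m m" "W \<in> carrier_mat m m"
      "Y \<in> carrier_mat m m" "Z \<in> carrier_mat m m"
    and ZY: "Z * Y = 1\<^sub>m m"
    and eq: "four_block_mat U Y V W = T * four_block_mat P Q R (0\<^sub>m m m)"
  shows "invertible_mat Q"
proof -
  obtain T11 T12 T21 T22 where sb: "split_block T m m = (T11, T12, T21, T22)"
    by (cases "split_block T m m") auto
  note Ts = split_block[OF sb carrier_matD[OF T]]
  note cT = Ts(1-4)
  have "four_block_mat U Y V W = four_block_mat T11 T12 T21 T22 * four_block_mat P Q R (0\<^sub>m m m)"
    unfolding eq Ts(5)[symmetric] ..
  also have "\<dots> = four_block_mat (T11 * P + T12 * R) (T11 * Q + T12 * 0\<^sub>m m m)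
      (T21 * P + T22 * R) (T21 * Q + T22 * 0\<^sub>m m m)"
    using cT c by (intro mult_four_block_mat) auto
  finally have "four_block_mat U Y V W = \<dots>" .
  then have "Y = T11 * Q + T12 * 0\<^sub>m m m"
    by (rule four_block_mat_inject[THEN conjunct2, THEN conjunct1, rotated 8]) (use c cT in auto)
  then have "Y = T11 * Q"
    using c cT by simp
  then have "(Z * T11) * Q = 1\<^sub>m m"
    using ZY c cT by simp
  then show ?thesis
    using c cT by (intro invertible_mat_left_inverse[of _ m "Z * T11"]) auto
qed

lemma four_block_right_inverse:
  fixes P Q C Qi Ci :: "complex mat"
  assumes c: "P \<in> carrier_mat m m" "Q \<in> carrier_mat m m" "C \<in> carrier_mat m m"
      "Qi \<in> carrier_mat m m" "Ci \<in> carrier_mat m m"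
    and Q: "Q * Qi = 1\<^sub>m m" and C: "Ci * C = 1\<^sub>m m"
  shows "four_block_mat P Q (- Ci) (0\<^sub>m m m) * four_block_mat (0\<^sub>m m m) (- C) Qi (Qi * P * C)
    = 1\<^sub>m (m + m)"
proof -
  have "Q * (Qi * P * C) = (Q * Qi) * (P * C)"
    using c assoc_mult_mat[OF c(2) c(4) mult_carrier_mat[OF c(1) c(3)]] by simp
  then have QPC: "Q * (Qi * P * C) = P * C"
    using c Q by simp
  have "four_block_mat P Q (- Ci) (0\<^sub>m m m) * four_block_mat (0\<^sub>m m m) (- C) Qi (Qi * P * C)
      = four_block_mat (P * 0\<^sub>m m m + Q * Qi) (P * - C + Q * (Qi * P * C))
          (- Ci * 0\<^sub>m m m + 0\<^sub>m m m * Qi) (- Ci * - C + 0\<^sub>m m m * (Qi * P * C))"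
    using c by (intro mult_four_block_mat) auto
  also have "\<dots> = four_block_mat (1\<^sub>m m) (0\<^sub>m m m) (0\<^sub>m m m) (1\<^sub>m m)"
  proof (rule cong_four_block_mat)
    show "P * - C + Q * (Qi * P * C) = 0\<^sub>m m m"
      unfolding QPC using c by simp
  qed (use c Q C in simp_all)
  finally show ?thesis by simp
qed

lemma transfer_mat_from_identity:
  fixes T P Q C U V Y :: "complex mat"
  assumes T: "T \<in> carrier_mat (m + m) (m + m)"
    and c: "P \<in> carrier_mat m m" "Q \<in> carrier_mat m m" "C \<in> carrier_mat m m"
      "U \<in> carrier_mat m m" "V \<in> carrier_mat m m" "Y \<in> carrier_mat m m"
    and iQ: "invertible_mat Q" and iC: "invertible_mat C"
    and eq: "four_block_mat (0\<^sub>m m m) (- Y) U V = T * four_block_mat P Q (- minv C) (0\<^sub>m m m)"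
  shows "T = four_block_mat (- (Y * minv Q)) (- (Y * minv Q * P * C))
    (V * minv Q) (V * minv Q * P * C - U * C)"
proof -
  note Qi = invertible_minv[OF c(2) iQ] and Ci = invertible_minv[OF c(3) iC]
  let ?S = "four_block_mat P Q (- minv C) (0\<^sub>m m m)"
  let ?M = "four_block_mat (0\<^sub>m m m) (- C) (minv Q) (minv Q * P * C)"
  have cS: "?S \<in> carrier_mat (m + m) (m + m)" and cM: "?M \<in> carrier_mat (m + m) (m + m)"
    using c Qi Ci by auto
  have cX: "minv Q * P * C \<in> carrier_mat m m" using c Qi by auto
  have "T = T * (?S * ?M)"
    using four_block_right_inverse[OF c(1-3) Qi(1) Ci(1) Qi(2) Ci(3)] T by simp
  also have "\<dots> = (T * ?S) * ?M"
    using T cS cM by (rule assoc_mult_mat[symmetric])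
  also have "\<dots> = four_block_mat
      (0\<^sub>m m m * 0\<^sub>m m m + - Y * minv Q) (0\<^sub>m m m * - C + - Y * (minv Q * P * C))
      (U * 0\<^sub>m m m + V * minv Q) (U * - C + V * (minv Q * P * C))"
    unfolding eq[symmetric] using c Qi cX by (intro mult_four_block_mat) auto
  also have "\<dots> = four_block_mat (- (Y * minv Q)) (- (Y * minv Q * P * C))
      (V * minv Q) (V * minv Q * P * C - U * C)"
  proof (rule cong_four_block_mat)
    have a: "Y * minv Q * P * C = Y * (minv Q * P * C)"
      by (simp only: assoc_mult_mat[OF c(6) Qi(1) c(1)]
          assoc_mult_mat[OF c(6) mult_carrier_mat[OF Qi(1) c(1)] c(3)])
    have z: "0\<^sub>m m m * - C = 0\<^sub>m m m" using c by auto
    show "0\<^sub>m m m * - C + - Y * (minv Q * P * C) = - (Y * minv Q * P * C)"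
      unfolding a z using mult_carrier_mat[OF c(6) cX] carrier_matD[OF c(6)] carrier_matD[OF cX]
      by simp
    have b: "V * minv Q * P * C = V * (minv Q * P * C)"
      by (simp only: assoc_mult_mat[OF c(5) Qi(1) c(1)]
          assoc_mult_mat[OF c(5) mult_carrier_mat[OF Qi(1) c(1)] c(3)])
    show "U * - C + V * (minv Q * P * C) = V * minv Q * P * C - U * C"
      unfolding b using mult_carrier_mat[OF c(5) cX] mult_carrier_mat[OF c(4) c(3)] c(3,4)
      by (simp add: carrier_matD minus_add_uminus_mat[of _ m m] comm_add_mat[of _ m m])
  qed (use c Qi in simp_all)
  finally show ?thesis .
qed

theorem proposition5:
  fixes m n :: nat and A B C :: "nat \<Rightarrow> complex mat" and E :: complex
  assumes "m \<ge> 1" and "n \<ge> 2"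
    and "\<And>k. k \<in> {1..n} \<Longrightarrow> A k \<in> carrier_mat m m"
    and "\<And>k. k \<in> {1..n} \<Longrightarrow> B k \<in> carrier_mat m m"
    and "\<And>k. k \<in> {1..n} \<Longrightarrow> C k \<in> carrier_mat m m"
    and "\<And>k. k \<in> {1..n} \<Longrightarrow> invertible_mat (B k)"
    and "\<And>k. k \<in> {1..n} \<Longrightarrow> invertible_mat (C k)"
    and "\<not> eigenvalue (hmat n m A B C) E"
  defines "g \<equiv> minv (hmat n m A B C - E \<cdot>\<^sub>m 1\<^sub>m (n * m))"
  shows "four_block_mat (0\<^sub>m m m) (- minv (B n)) (blk m g n 1) (blk m g n n)
           = Tmat n m A B C E * four_block_mat (blk m g 1 1) (blk m g 1 n) (- minv (C 1)) (0\<^sub>m m m)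
         \<and> invertible_mat (blk m g 1 n)
         \<and> Tmat n m A B C E = four_block_mat
           (- (minv (B n) * minv (blk m g 1 n)))
           (- (minv (B n) * minv (blk m g 1 n) * blk m g 1 1 * C 1))
           (blk m g n n * minv (blk m g 1 n))
           (blk m g n n * minv (blk m g 1 n) * blk m g 1 1 * C 1 - blk m g n 1 * C 1)"
proof -
  note cA = assms(3) and cB = assms(4) and cC = assms(5) and iB = assms(6) and iC = assms(7)
  have n1: "1 \<in> {1..n}" "n \<in> {1..n}" using assms(2) by auto
  have H: "hmat n m A B C - E \<cdot>\<^sub>m 1\<^sub>m (n * m) \<in> carrier_mat (n * m) (n * m)"
    by (rule minus_carrier_mat) simp
  have "invertible_mat (hmat n m A B C - E \<cdot>\<^sub>m 1\<^sub>m (n * m))"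
    using hmat_carrier assms(8) by (rule invertible_if_not_eigenvalue)
  note g = invertible_minv[OF H this, folded g_def]
  have identity: "four_block_mat (0\<^sub>m m m) (- minv (B n)) (blk m g n 1) (blk m g n n)
      = Tmat n m A B C E * four_block_mat (blk m g 1 1) (blk m g 1 n) (- minv (C 1)) (0\<^sub>m m m)"
    using cA cB cC iB iC[OF n1(1)] assms(2) g(1,2) by (rule resolvent_transfer_identity)
  have T: "Tmat n m A B C E \<in> carrier_mat (m + m) (m + m)"
    using Tprod_carrier[of n A m B C n E] cA cB cC iB unfolding Tmat_def mult_2 by simp
  note Bn = invertible_minv[OF cB[OF n1(2)] iB[OF n1(2)]]
  note C1 = invertible_minv[OF cC[OF n1(1)] iC[OF n1(1)]]
  have inv: "invertible_mat (blk m g 1 n)"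
    by (rule invertible_top_right_factor[OF T _ _ _ _ _ _ _ _ _ identity, where Z = "- B n"])
      (use Bn C1 cB[OF n1(2)] in auto)
  have "Tmat n m A B C E = four_block_mat
      (- (minv (B n) * minv (blk m g 1 n)))
      (- (minv (B n) * minv (blk m g 1 n) * blk m g 1 1 * C 1))
      (blk m g n n * minv (blk m g 1 n))
      (blk m g n n * minv (blk m g 1 n) * blk m g 1 1 * C 1 - blk m g n 1 * C 1)"
    by (rule transfer_mat_from_identity[OF T _ _ _ _ _ _ inv iC[OF n1(1)] identity])
      (use Bn cC[OF n1(1)] in auto)
  with identity inv show ?thesis by blast
qed

end
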